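(* Consider the centralized caching problem with uncoded prefetching with $N$ files, $K$ users, and local cache size of $M$ files per user, $t=KM/N$. For every file size $F$, every $\epsilon>0$, and every statistics $\boldsymbol{s}$, $$\min_{\boldsymbol{\mathcal{M}}}R^*_\epsilon(\boldsymbol{s},\boldsymbol{\mathcal{M}})\ \ge\ \mathrm{Conv}\left(\frac{\binom{K}{t+1}-\binom{K-N_{\mathrm{e}}(\boldsymbol{s})}{t+1}}{\binom{K}{t}}\right)-\left(\frac{1}{F}+N_{\mathrm{e}}^2(\boldsymbol{s})\epsilon\right),$$ where the minimum is over all uncoded prefetchings satisfying the memory constraint and $\mathrm{Conv}(f(t))$ denotes the lower convex envelope of the points $\{(t,f(t)):t\in\{0,1,\dots,K\}\}$, evaluated at $t=KM/N$.
   Context: Setting: $N$ files $W_1,\dots,W_N$ of $F$ bits each, all bits i.i.d. Bernoulli$(1/2)$; $K$ users each with $MF$ bits of cache, $M\in[0,N]$. An uncoded prefetching $\boldsymbol{\mathcal{M}}=(\mathcal{M}_1,\dots,\mathcal{M}_K)$: each $\mathcal{M}_k$ is a set of at most $MF$ bit indices and user $k$ stores those bits. For a demand $\boldsymbol{d}\in\{1,\dots,N\}^K$, a rate $R$ is $\epsilon$-achievable if there are an encoder $X=\psi(W_1,\dots,W_N)\in\{0,1\}^{RF}$ and decoders such that each user $k$ recovers $W_{d_k}$ from $X$ and its cached bits with error probability at most $\epsilon$; $R^*_\epsilon(\boldsymbol{d},\boldsymbol{\mathcal{M}})$ is the minimum such rate. The statistics $\boldsymbol{s}(\boldsymbol{d})$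 of a demand is the length-$N$ array, sorted in nonincreasing order, whose $i$-th entry is the number of users requesting the $i$-th most requested file; the type $\mathcal{D}_{\boldsymbol{s}}$ is the set of demands with statistics $\boldsymbol{s}$; $N_{\mathrm{e}}(\boldsymbol{s})$ is the number of distinct files requested by any demand in $\mathcal{D}_{\boldsymbol{s}}$ (number of nonzero entries of $\boldsymbol{s}$). $R^*_\epsilon(\boldsymbol{s},\boldsymbol{\mathcal{M}})=\frac{1}{|\mathcal{D}_{\boldsymbol{s}}|}\sum_{\boldsymbol{d}\in\mathcal{D}_{\boldsymbol{s}}}R^*_\epsilon(\boldsymbol{d},\boldsymbol{\mathcal{M}})$. Convention: $\binom{n}{k}=0$ when $k>n$. *)

theory Defs
  imports Complex_Main
begin

text \<open>A library realisation: bit (n,j) is bit j of file n (files 0..<N, bits 0..<F);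
  all other positions are fixed to False. The uniform distribution on this finite set
  is exactly N F i.i.d. Bernoulli(1/2) bits.\<close>
definition lib_space :: "nat \<Rightarrow> nat \<Rightarrow> (nat \<times> nat \<Rightarrow> bool) set" where
  "lib_space N F = {w. \<forall>i. i \<notin> {..<N} \<times> {..<F} \<longrightarrow> w i = False}"

definition cache_view :: "(nat \<times> nat) set \<Rightarrow> (nat \<times> nat \<Rightarrow> bool) \<Rightarrow> (nat \<times> nat \<Rightarrow> bool)" where
  "cache_view Mk w = (\<lambda>i. if i \<in> Mk then w i else False)"

definition user_err :: "nat \<Rightarrow> nat \<Rightarrow> ((nat \<times> nat \<Rightarrow> bool) \<Rightarrow> bool list)
    \<Rightarrow> (bool list \<Rightarrow> (nat \<times> nat \<Rightarrow> bool) \<Rightarrow> nat \<Rightarrow> bool) \<Rightarrow> (nat \<times> nat) set \<Rightarrow> nat \<Rightarrow> real" where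
  "user_err N F psi phi Mk n =
     real (card {w \<in> lib_space N F. \<exists>j<F. phi (psi w) (cache_view Mk w) j \<noteq> w (n, j)})
     / real (card (lib_space N F))"

definition achievable_len :: "nat \<Rightarrow> nat \<Rightarrow> nat \<Rightarrow> real \<Rightarrow> nat list \<Rightarrow> (nat \<Rightarrow> (nat \<times> nat) set) \<Rightarrow> nat \<Rightarrow> bool" where
  "achievable_len N K F eps d P L \<longleftrightarrow>
     (\<exists>(psi :: (nat \<times> nat \<Rightarrow> bool) \<Rightarrow> bool list)
        (phi :: nat \<Rightarrow> bool list \<Rightarrow> (nat \<times> nat \<Rightarrow> bool) \<Rightarrow> nat \<Rightarrow> bool).
        (\<forall>w \<in> lib_space N F. length (psi w) = L) \<and>
        (\<forall>k<K. user_err N F psi (phi k) (P k) (d ! k) \<le> eps))"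

definition opt_rate :: "nat \<Rightarrow> nat \<Rightarrow> nat \<Rightarrow> real \<Rightarrow> nat list \<Rightarrow> (nat \<Rightarrow> (nat \<times> nat) set) \<Rightarrow> real" where
  "opt_rate N K F eps d P = real (LEAST L. achievable_len N K F eps d P L) / real F"

definition demands :: "nat \<Rightarrow> nat \<Rightarrow> nat list set" where
  "demands N K = {d. length d = K \<and> set d \<subseteq> {..<N}}"

definition stats :: "nat \<Rightarrow> nat list \<Rightarrow> nat list" where
  "stats N d = rev (sort (map (\<lambda>n. count_list d n) [0..<N]))"

definition demand_type :: "nat \<Rightarrow> nat \<Rightarrow> nat list \<Rightarrow> nat list set" where
  "demand_type N K s = {d \<in> demands N K. stats N d = s}"

definition Ne :: "nat list \<Rightarrow> nat" where
  "Ne s = length (filter (\<lambda>x. x \<noteq> 0) s)"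

definition avg_rate :: "nat \<Rightarrow> nat \<Rightarrow> nat \<Rightarrow> real \<Rightarrow> nat list \<Rightarrow> (nat \<Rightarrow> (nat \<times> nat) set) \<Rightarrow> real" where
  "avg_rate N K F eps s P =
     (\<Sum>d \<in> demand_type N K s. opt_rate N K F eps d P) / real (card (demand_type N K s))"

definition uncoded_prefetching :: "nat \<Rightarrow> nat \<Rightarrow> nat \<Rightarrow> real \<Rightarrow> (nat \<Rightarrow> (nat \<times> nat) set) \<Rightarrow> bool" where
  "uncoded_prefetching N K F M P \<longleftrightarrow>
     (\<forall>k<K. P k \<subseteq> {..<N} \<times> {..<F} \<and> real (card (P k)) \<le> M * real F)"

definition lower_conv_env :: "nat \<Rightarrow> (nat \<Rightarrow> real) \<Rightarrow> real \<Rightarrow> real" where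
  "lower_conv_env K f x = Inf {\<Sum>i\<le>K. l i * f i | l :: nat \<Rightarrow> real.
       (\<forall>i\<le>K. 0 \<le> l i) \<and> (\<Sum>i\<le>K. l i) = 1 \<and> (\<Sum>i\<le>K. l i * real i) = x}"

end

theory Submission
  imports Defs "HOL-Combinatorics.Multiset_Permutations"
begin

text \<open>
  Fix a demand and an ordering of the users, and keep the first user requesting each requested file.
  A genie hands the i-th of these users the caches of its predecessors; it must then decode every bit
  of its file that neither it nor a predecessor caches. The transmission together with the remaining
  library bits determines every library on which these users decode, and decoding fails on at most
  a fraction \<open>\<epsilon>\<close> of libraries per user, so a transmission of \<open>L\<close> bits covers at most
  \<open>(L + 1) / (1 - Ne \<epsilon>)\<close> such bits; this is the loss \<open>1/F + Ne\<^sup>2 \<epsilon>\<close>. Averaging over the demand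
  type and over all orderings, symmetry under relabelling files and users shows that a bit cached by
  exactly \<open>t\<close> users is counted \<open>(C(K,t+1) - C(K-Ne,t+1)) / C(K,t)\<close> times on average. By the memory
  constraint the cache multiplicities of the bits form a convex combination with mean at most
  \<open>KM/N\<close>, whence the lower convex envelope.
\<close>

lemma mult_exp_le_exp_mult:
  fixes b L :: nat
  assumes "L < b"
  shows "b * 2 ^ L \<le> (L + 1) * 2 ^ b"
proof -
  obtain D where b: "b = L + D" using assms less_imp_add_positive by blast
  have "L + D \<le> (L + 1) * (D + 1)" by (simp add: algebra_simps)
  also have "\<dots> \<le> (L + 1) * 2 ^ D"
    using less_exp[of D] by (intro mult_left_mono) (simp_all add: Suc_le_eq)
  finally have "(L + D) * 2 ^ L \<le> (L + 1) * 2 ^ D * 2 ^ L" by (rule mult_right_mono) simp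
  then show ?thesis unfolding b by (simp add: power_add algebra_simps)
qed

lemma linear_le_of_exp_le:
  fixes c :: real and b L :: nat
  assumes "0 \<le> c" and "(1 - c) * 2 ^ b \<le> 2 ^ L"
  shows "real b * (1 - c) \<le> real L + 1"
proof (cases "b \<le> L \<or> 1 - c \<le> 0")
  case True
  moreover have "real b * (1 - c) \<le> real b" using assms(1) by (simp add: mult_left_le)
  moreover have "1 - c \<le> 0 \<Longrightarrow> real b * (1 - c) \<le> 0" by (simp add: mult_nonneg_nonpos)
  ultimately show ?thesis by linarith
next
  case False
  then have "real b * ((1 - c) * 2 ^ b) \<le> real b * 2 ^ L"
    using assms(2) by (intro mult_left_mono) auto
  also have "\<dots> \<le> (real L + 1) * 2 ^ b"
  proof -
    have "b * 2 ^ L \<le> (L + 1) * 2 ^ b" using mult_exp_le_exp_mult[of L b] False by simp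
    then have "real (b * 2 ^ L) \<le> real ((L + 1) * 2 ^ b)" by (simp only: of_nat_le_iff)
    then show ?thesis by (simp add: algebra_simps)
  qed
  finally show ?thesis by (simp add: mult.assoc)
qed

lemma card_Diff_UN_ge:
  fixes X :: "'a set" and E :: "nat \<Rightarrow> 'a set"
  assumes "finite X" and "\<And>i. i < m \<Longrightarrow> E i \<subseteq> X"
    and "\<And>i. i < m \<Longrightarrow> real (card (E i)) \<le> eps * real (card X)"
  shows "(1 - real m * eps) * real (card X) \<le> real (card (X - (\<Union>i<m. E i)))"
proof -
  let ?U = "\<Union>i<m. E i"
  have "?U \<subseteq> X" using assms(2) by blast
  then have "card X = card (X - ?U) + card ?U"
    using assms(1) by (metis card_Diff_subset card_mono finite_subset le_add_diff_inverse2)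
  moreover have "real (card ?U) \<le> (\<Sum>i<m. real (card (E i)))"
    using card_UN_le[of "{..<m}" E] by (simp flip: of_nat_sum)
  moreover have "(\<Sum>i<m. real (card (E i))) \<le> real m * eps * real (card X)"
    using sum_mono[of "{..<m}" "\<lambda>i. real (card (E i))" "\<lambda>_. eps * real (card X)"] assms(3) by simp
  ultimately show ?thesis by (simp add: algebra_simps)
qed

lemma card_eq_by_involution:
  assumes "\<And>x. x \<in> X \<Longrightarrow> f x \<in> X \<and> f (f x) = x \<and> (Q x \<longleftrightarrow> R (f x))"
  shows "card {x\<in>X. Q x} = card {x\<in>X. R x}"
proof -
  have "bij_betw f {x\<in>X. Q x} {x\<in>X. R x}"
    by (rule bij_betw_byWitness[where f' = f]) (use assms in force)+
  then show ?thesis by (rule bij_betw_same_card)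
qed

lemma sum_card_filter_swap:
  assumes "finite A" and "finite B"
  shows "(\<Sum>a\<in>A. card {b\<in>B. R a b}) = (\<Sum>b\<in>B. card {a\<in>A. R a b})"
proof -
  have "(\<Sum>a\<in>A. card {b\<in>B. R a b}) = (\<Sum>a\<in>A. \<Sum>b\<in>B. of_bool (R a b))"
    using assms(2) by (simp add: Int_def)
  also have "\<dots> = (\<Sum>b\<in>B. \<Sum>a\<in>A. of_bool (R a b))" by (rule sum.swap)
  also have "\<dots> = (\<Sum>b\<in>B. card {a\<in>A. R a b})"
    using assms(1) by (simp add: Int_def)
  finally show ?thesis .
qed

lemma sum_comp_by_fibres:
  fixes g :: "nat \<Rightarrow> real"
  assumes "finite A" and "\<forall>x\<in>A. t x \<le> K"
  shows "(\<Sum>x\<in>A. g (t x)) = (\<Sum>i\<le>K. real (card {x\<in>A. t x = i}) * g i)"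
proof -
  have "(\<Sum>x\<in>A. g (t x)) = (\<Sum>i\<le>K. \<Sum>x\<in>{x\<in>A. t x = i}. g (t x))"
    using assms by (intro sum.group[symmetric]) auto
  then show ?thesis by simp
qed

lemma average_product_le:
  fixes f :: "'a \<Rightarrow> real" and g :: "'a \<times> 'b \<Rightarrow> real"
  assumes "finite D" and "finite Q" and "Q \<noteq> {}"
    and "\<And>d p. d \<in> D \<Longrightarrow> p \<in> Q \<Longrightarrow> g (d, p) \<le> f d"
  shows "(\<Sum>x\<in>D \<times> Q. g x) / real (card (D \<times> Q)) \<le> (\<Sum>d\<in>D. f d) / real (card D)"
proof -
  have "(\<Sum>x\<in>D \<times> Q. g x) = (\<Sum>d\<in>D. \<Sum>p\<in>Q. g (d, p))"
    by (simp add: sum.cartesian_product)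
  also have "\<dots> \<le> (\<Sum>d\<in>D. real (card Q) * f d)"
  proof (rule sum_mono)
    fix d assume "d \<in> D"
    then have "(\<Sum>p\<in>Q. g (d, p)) \<le> (\<Sum>p\<in>Q. f d)" by (intro sum_mono assms(4))
    then show "(\<Sum>p\<in>Q. g (d, p)) \<le> real (card Q) * f d" by simp
  qed
  finally have "(\<Sum>x\<in>D \<times> Q. g x) \<le> real (card Q) * (\<Sum>d\<in>D. f d)"
    by (simp add: sum_distrib_left)
  moreover have "0 < card Q" using assms(2,3) by (simp add: card_gt_0_iff)
  ultimately show ?thesis
    by (simp add: card_cartesian_product divide_simps mult.commute)
qed

lemma sum_choose_diff:
  assumes "m \<le> K"
  shows "(\<Sum>i<m. real ((K - Suc i) choose t)) = real (K choose Suc t) - real ((K - m) choose Suc t)"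
  using assms
proof (induction m)
  case (Suc m)
  then have "K - m = Suc (K - Suc m)" by simp
  then show ?case using Suc by simp
qed simp

section \<open>Lower convex envelope\<close>

lemma lower_conv_env_le:
  fixes f l :: "nat \<Rightarrow> real"
  assumes f_nonneg: "\<forall>i\<le>K. 0 \<le> f i" and f_K: "f K = 0"
    and l_nonneg: "\<forall>i\<le>K. 0 \<le> l i" and l_sum: "(\<Sum>i\<le>K. l i) = 1"
    and mean: "(\<Sum>i\<le>K. l i * real i) \<le> z" and z: "z \<le> real K"
  shows "lower_conv_env K f z \<le> (\<Sum>i\<le>K. l i * f i)"
proof -
  define y where "y = (\<Sum>i\<le>K. l i * real i)"
  have "y \<le> (\<Sum>i\<le>K. l i * real K)"
    unfolding y_def using l_nonneg by (intro sum_mono) (auto intro: mult_left_mono)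
  then have y_K: "y \<le> real K" using l_sum by (simp flip: sum_distrib_right)
  \<comment> \<open>Shifting the weight \<open>\<theta>\<close> to \<open>K\<close>, where \<open>f\<close> vanishes, raises the mean to \<open>z\<close>
    and scales the value by \<open>1 - \<theta>\<close>.\<close>
  define \<theta> where "\<theta> = (if y < real K then (z - y) / (real K - y) else 0)"
  have \<theta>: "0 \<le> \<theta>" "\<theta> \<le> 1"
    using mean z unfolding \<theta>_def y_def[symmetric] by (auto simp: divide_simps)
  have z_eq: "(1 - \<theta>) * y + \<theta> * real K = z"
  proof (cases "y < real K")
    case True
    then have "\<theta> * (real K - y) = z - y" by (simp add: \<theta>_def)
    then show ?thesis by (simp add: algebra_simps)
  next
    case False
    then show ?thesis using y_K mean z by (simp add: \<theta>_def y_def)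
  qed
  define l' where "l' i = (1 - \<theta>) * l i + (if i = K then \<theta> else 0)" for i
  have sum_l': "(\<Sum>i\<le>K. l' i * h i) = (1 - \<theta>) * (\<Sum>i\<le>K. l i * h i) + \<theta> * h K" for h :: "nat \<Rightarrow> real"
  proof -
    have "l' i * h i = (1 - \<theta>) * (l i * h i) + (if i = K then \<theta> * h K else 0)" for i
      by (simp add: l'_def algebra_simps)
    then show ?thesis by (simp add: sum.distrib sum_distrib_left)
  qed
  have "(\<Sum>i\<le>K. l' i * f i) \<in> {\<Sum>i\<le>K. l i * f i | l :: nat \<Rightarrow> real.
       (\<forall>i\<le>K. 0 \<le> l i) \<and> (\<Sum>i\<le>K. l i) = 1 \<and> (\<Sum>i\<le>K. l i * real i) = z}"
    using sum_l'[of "\<lambda>_. 1"] sum_l'[of real] l_nonneg \<theta> l_sum z_eq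
    by (intro CollectI exI[of _ l']) (auto simp: l'_def y_def)
  moreover have "bdd_below {\<Sum>i\<le>K. l i * f i | l :: nat \<Rightarrow> real.
       (\<forall>i\<le>K. 0 \<le> l i) \<and> (\<Sum>i\<le>K. l i) = 1 \<and> (\<Sum>i\<le>K. l i * real i) = z}"
    by (rule bdd_belowI[where m = 0]) (use f_nonneg in \<open>auto intro!: sum_nonneg\<close>)
  ultimately have "lower_conv_env K f z \<le> (\<Sum>i\<le>K. l' i * f i)"
    unfolding lower_conv_env_def by (rule cInf_lower)
  also have "\<dots> \<le> (\<Sum>i\<le>K. l i * f i)"
  proof -
    have "0 \<le> (\<Sum>i\<le>K. l i * f i)" using l_nonneg f_nonneg by (auto intro: sum_nonneg)
    then show ?thesis using sum_l'[of f] f_K \<theta> by (simp add: mult_left_le_one_le)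
  qed
  finally show ?thesis .
qed

section \<open>Genie-aided bound for a single demand\<close>

lemma card_lib_space: "card (lib_space N F) = 2 ^ (N * F)"
proof -
  have "bij_betw (\<lambda>w. {i. w i}) (lib_space N F) (Pow ({..<N} \<times> {..<F}))"
    by (rule bij_betw_byWitness[where f'="\<lambda>S i. i \<in> S"]) (auto simp: lib_space_def)
  then show ?thesis
    by (simp add: bij_betw_same_card card_Pow card_cartesian_product)
qed

lemma finite_lib_space: "finite (lib_space N F)"
  using card_lib_space[of N F] by (metis card.infinite power_not_zero zero_neq_numeral)

definition genie_bits ::
    "nat \<Rightarrow> nat list \<Rightarrow> (nat \<Rightarrow> (nat \<times> nat) set) \<Rightarrow> nat list \<Rightarrow> (nat \<times> nat) set" where
  "genie_bits F d P us =
     {(n, j). j < F \<and> (\<exists>i<length us. n = d ! (us ! i) \<and> (\<forall>l\<le>i. (n, j) \<notin> P (us ! l)))}"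

lemma genie_bits_subset:
  assumes "d \<in> demands N K" and "set us \<subseteq> {..<K}"
  shows "genie_bits F d P us \<subseteq> {..<N} \<times> {..<F}"
  using assms by (fastforce simp: genie_bits_def demands_def set_conv_nth)

lemma decoding_determines_genie_bits:
  assumes dec: "\<forall>v\<in>{w, w'}. \<forall>i<length us. \<forall>j<F.
      phi (us ! i) (psi v) (cache_view (P (us ! i)) v) j = v (d ! (us ! i), j)"
    and same_signal: "psi w = psi w'"
    and same_outside: "\<And>q. q \<notin> genie_bits F d P us \<Longrightarrow> w q = w' q"
  shows "w = w'"
proof -
  \<comment> \<open>A genie bit in the cache of \<open>us ! i\<close> belongs to the file of an earlier user.\<close>
  have same_file: "\<forall>j<F. w (d ! (us ! i), j) = w' (d ! (us ! i), j)" if "i < length us" for i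
    using that
  proof (induction i rule: less_induct)
    case (less i)
    have same_cache: "cache_view (P (us ! i)) w = cache_view (P (us ! i)) w'"
    proof
      fix q
      show "cache_view (P (us ! i)) w q = cache_view (P (us ! i)) w' q"
      proof (cases "q \<in> P (us ! i) \<and> q \<in> genie_bits F d P us")
        case True
        then obtain n j i' where q: "q = (n, j)" and "j < F" "i' < length us" "n = d ! (us ! i')"
          and uncached: "\<forall>l\<le>i'. (n, j) \<notin> P (us ! l)"
          unfolding genie_bits_def by blast
        moreover have "i' < i" using True uncached q by (meson not_le_imp_less order_refl)
        ultimately show ?thesis using less.IH[of i'] less.prems by (simp add: cache_view_def)
      qed (use same_outside in \<open>auto simp: cache_view_def\<close>)
    qed
    show ?case
    proof (intro allI impI)
      fix j assume "j < F"
      then have "w (d ! (us ! i), j) = phi (us ! i) (psi w) (cache_view (P (us ! i)) w) j"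
        using dec less.prems by simp
      also have "\<dots> = phi (us ! i) (psi w') (cache_view (P (us ! i)) w') j"
        by (simp add: same_signal same_cache)
      also have "\<dots> = w' (d ! (us ! i), j)"
        using dec less.prems \<open>j < F\<close> by simp
      finally show "w (d ! (us ! i), j) = w' (d ! (us ! i), j)" .
    qed
  qed
  show ?thesis
  proof
    fix q
    show "w q = w' q"
      using same_outside[of q] same_file by (cases q) (auto simp: genie_bits_def)
  qed
qed

definition decoding_libraries ::
    "nat \<Rightarrow> nat \<Rightarrow> ((nat \<times> nat \<Rightarrow> bool) \<Rightarrow> bool list)
      \<Rightarrow> (nat \<Rightarrow> bool list \<Rightarrow> (nat \<times> nat \<Rightarrow> bool) \<Rightarrow> nat \<Rightarrow> bool)
      \<Rightarrow> nat list \<Rightarrow> (nat \<Rightarrow> (nat \<times> nat) set) \<Rightarrow> nat list \<Rightarrow> (nat \<times> nat \<Rightarrow> bool) set" where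
  "decoding_libraries N F psi phi d P us = {w \<in> lib_space N F. \<forall>i<length us. \<forall>j<F.
     phi (us ! i) (psi w) (cache_view (P (us ! i)) w) j = w (d ! (us ! i), j)}"

lemma card_decoding_libraries_ge:
  assumes err: "\<forall>k<K. user_err N F psi (phi k) (P k) (d ! k) \<le> eps"
    and us: "set us \<subseteq> {..<K}"
  shows "(1 - real (length us) * eps) * 2 ^ (N * F) \<le> real (card (decoding_libraries N F psi phi d P us))"
proof -
  define wrong where "wrong i = {w \<in> lib_space N F. \<exists>j<F.
      phi (us ! i) (psi w) (cache_view (P (us ! i)) w) j \<noteq> w (d ! (us ! i), j)}" for i
  have card_lib: "real (card (lib_space N F)) = 2 ^ (N * F)"
    by (simp add: card_lib_space)
  have "real (card (wrong i)) \<le> eps * real (card (lib_space N F))" if "i < length us" for i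
  proof -
    have "us ! i < K" using us that by (auto simp: set_conv_nth)
    then have "real (card (wrong i)) / real (card (lib_space N F)) \<le> eps"
      using err by (simp add: user_err_def wrong_def)
    then show ?thesis using card_lib by (simp add: divide_le_eq)
  qed
  moreover have "lib_space N F - (\<Union>i<length us. wrong i) = decoding_libraries N F psi phi d P us"
    by (auto simp: decoding_libraries_def wrong_def)
  ultimately show ?thesis
    using card_Diff_UN_ge[of "lib_space N F" "length us" wrong eps] finite_lib_space card_lib
    by (simp add: wrong_def)
qed

lemma card_decoding_libraries_le:
  assumes len: "\<forall>w\<in>lib_space N F. length (psi w) = L"
    and d: "d \<in> demands N K" and us: "set us \<subseteq> {..<K}"
  shows "real (card (decoding_libraries N F psi phi d P us)) * 2 ^ card (genie_bits F d P us)
    \<le> 2 ^ (N * F) * 2 ^ L"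
proof -
  define G where "G = decoding_libraries N F psi phi d P us"
  define B where "B = genie_bits F d P us"
  have B_sub: "B \<subseteq> {..<N} \<times> {..<F}"
    unfolding B_def by (rule genie_bits_subset[OF d us])
  then have card_B: "card B \<le> N * F" and fin_B: "finite B"
    using card_mono[OF _ B_sub] finite_subset[OF B_sub] by (simp_all add: card_cartesian_product)
  \<comment> \<open>A decoding library is determined by the transmission and its bits outside the genie bits.\<close>
  define h where "h w = ({i. w i} - B, psi w)" for w
  have "inj_on h G"
  proof (rule inj_onI)
    fix w w' assume "w \<in> G" "w' \<in> G" and h_eq: "h w = h w'"
    have "w q = w' q" if "q \<notin> B" for q
    proof -
      have "{i. w i} - B = {i. w' i} - B" using h_eq by (simp add: h_def)
      then show ?thesis using that by blast
    qed
    with \<open>w \<in> G\<close> \<open>w' \<in> G\<close> h_eq show "w = w'"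
      by (intro decoding_determines_genie_bits[where F = F and d = d and P = P and us = us
            and phi = phi and psi = psi]) (auto simp: G_def decoding_libraries_def h_def B_def)
  qed
  moreover have "h ` G \<subseteq> Pow ({..<N} \<times> {..<F} - B) \<times> {xs. length xs = L}"
    using len by (auto simp: h_def G_def decoding_libraries_def lib_space_def)
  moreover have "finite {xs :: bool list. length xs = L}"
    and "card {xs :: bool list. length xs = L} = 2 ^ L"
    using finite_lists_length_eq[of "UNIV :: bool set" L] card_lists_length_eq[of "UNIV :: bool set" L]
    by simp_all
  ultimately have "card G \<le> card (Pow ({..<N} \<times> {..<F} - B)) * 2 ^ L"
    using card_mono[of "Pow ({..<N} \<times> {..<F} - B) \<times> {xs :: bool list. length xs = L}" "h ` G"]
    by (simp add: card_image card_cartesian_product)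
  also have "\<dots> = 2 ^ (N * F - card B) * 2 ^ L"
    using B_sub fin_B by (simp add: card_Pow card_cartesian_product card_Diff_subset)
  finally have "real (card G) * 2 ^ card B \<le> real (2 ^ (N * F - card B) * 2 ^ L) * 2 ^ card B"
    by (intro mult_right_mono) (simp_all only: of_nat_le_iff zero_le_power zero_le_numeral)
  also have "\<dots> = 2 ^ (N * F) * 2 ^ L"
    using card_B by (simp add: mult_ac flip: power_add)
  finally show ?thesis by (simp add: G_def B_def)
qed

lemma genie_bits_bound:
  assumes ach: "achievable_len N K F eps d P L" and d: "d \<in> demands N K"
    and us: "set us \<subseteq> {..<K}" and eps: "0 \<le> eps"
  shows "real (card (genie_bits F d P us)) * (1 - real (length us) * eps) \<le> real L + 1"
proof -
  obtain psi phi where len: "\<forall>w\<in>lib_space N F. length (psi w) = L"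
    and err: "\<forall>k<K. user_err N F psi (phi k) (P k) (d ! k) \<le> eps"
    using ach unfolding achievable_len_def by blast
  define b where "b = card (genie_bits F d P us)"
  define G where "G = decoding_libraries N F psi phi d P us"
  have "(1 - real (length us) * eps) * 2 ^ (N * F) * 2 ^ b \<le> real (card G) * 2 ^ b"
    using card_decoding_libraries_ge[OF err us] by (simp add: G_def)
  also have "\<dots> \<le> 2 ^ (N * F) * 2 ^ L"
    using card_decoding_libraries_le[OF len d us, of phi P] by (simp add: G_def b_def)
  finally have "2 ^ (N * F) * ((1 - real (length us) * eps) * 2 ^ b) \<le> 2 ^ (N * F) * 2 ^ L"
    by (simp add: mult_ac)
  then have "(1 - real (length us) * eps) * 2 ^ b \<le> 2 ^ L" by simp
  with eps show ?thesis
    unfolding b_def by (intro linear_le_of_exp_le) simp_all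
qed

lemma achievable_len_uncoded:
  assumes d: "d \<in> demands N K" and eps: "0 \<le> eps"
  shows "achievable_len N K F eps d P (N * F)"
proof -
  define psi :: "(nat \<times> nat \<Rightarrow> bool) \<Rightarrow> bool list"
    where "psi w = map (\<lambda>i. w (i div F, i mod F)) [0..<N * F]" for w
  define phi :: "nat \<Rightarrow> bool list \<Rightarrow> (nat \<times> nat \<Rightarrow> bool) \<Rightarrow> nat \<Rightarrow> bool"
    where "phi k x c j = x ! (d ! k * F + j)" for k x c j
  have "user_err N F psi (phi k) (P k) (d ! k) = 0" if "k < K" for k
  proof -
    have "d ! k < N" using d that by (auto simp: demands_def set_conv_nth)
    have "d ! k * F + j < N * F" if "j < F" for j
    proof -
      have "d ! k * F + j < (d ! k + 1) * F" using that by simp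
      also have "\<dots> \<le> N * F" using \<open>d ! k < N\<close> by (intro mult_right_mono) auto
      finally show ?thesis .
    qed
    then have "phi k (psi w) (cache_view (P k) w) j = w (d ! k, j)" if "j < F" for w j
      using that by (simp add: phi_def psi_def)
    then show ?thesis by (simp add: user_err_def)
  qed
  with eps show ?thesis
    unfolding achievable_len_def by (intro exI[of _ psi] exI[of _ phi]) (simp add: psi_def)
qed

lemma card_genie_bits_le: "card (genie_bits F d P us) \<le> length us * F"
proof -
  have "genie_bits F d P us \<subseteq> (\<Union>i<length us. {d ! (us ! i)} \<times> {..<F})"
    unfolding genie_bits_def by auto
  then have "card (genie_bits F d P us) \<le> card (\<Union>i<length us. {d ! (us ! i)} \<times> {..<F})"
    by (intro card_mono) auto
  also have "\<dots> \<le> (\<Sum>i<length us. card ({d ! (us ! i)} \<times> {..<F}))"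
    by (rule card_UN_le) simp
  finally show ?thesis by (simp add: card_cartesian_product)
qed

lemma opt_rate_ge_genie_bits:
  assumes d: "d \<in> demands N K" and us: "set us \<subseteq> {..<K}" and eps: "0 \<le> eps" and F: "0 < F"
  shows "real (card (genie_bits F d P us)) / real F - 1 / real F - real (length us) ^ 2 * eps
    \<le> opt_rate N K F eps d P"
proof -
  define L where "L = (LEAST L. achievable_len N K F eps d P L)"
  define b where "b = real (card (genie_bits F d P us))"
  define m where "m = real (length us)"
  have "achievable_len N K F eps d P L"
    unfolding L_def by (rule LeastI[where P = "achievable_len N K F eps d P", OF achievable_len_uncoded[OF d eps]])
  from genie_bits_bound[OF this d us eps] have "b * (1 - m * eps) \<le> real L + 1"
    by (simp add: b_def m_def)
  moreover have "b * m * eps \<le> m * real F * m * eps"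
    using card_genie_bits_le[of F d P us] eps
    by (intro mult_right_mono) (simp_all add: b_def m_def flip: of_nat_mult)
  ultimately have "b - 1 - m\<^sup>2 * eps * real F \<le> real L"
    by (simp add: algebra_simps power2_eq_square)
  then have "(b - 1 - m\<^sup>2 * eps * real F) / real F \<le> real L / real F"
    using F by (intro divide_right_mono) auto
  then show ?thesis
    using F by (simp add: opt_rate_def L_def b_def m_def diff_divide_distrib)
qed

section \<open>Request chains\<close>

fun first_requesters :: "nat list \<Rightarrow> nat set \<Rightarrow> nat list \<Rightarrow> nat list" where
  "first_requesters d seen [] = []"
| "first_requesters d seen (u # us) =
    (if d ! u \<in> seen then first_requesters d seen us
     else u # first_requesters d (insert (d ! u) seen) us)"

lemma set_first_requesters_subset: "set (first_requesters d seen us) \<subseteq> set us"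
  by (induction us arbitrary: seen) auto

lemma nth_image_first_requesters:
  "nth d ` set (first_requesters d seen us) = nth d ` set us - seen"
  by (induction us arbitrary: seen) auto

lemma distinct_map_first_requesters: "distinct (map (nth d) (first_requesters d seen us))"
  by (induction us arbitrary: seen) (auto simp: nth_image_first_requesters)

lemma length_first_requesters:
  "length (first_requesters d seen us) = card (nth d ` set us - seen)"
  by (metis distinct_card distinct_map_first_requesters length_map list.set_map
      nth_image_first_requesters)

lemma first_requesters_map:
  assumes "\<forall>u\<in>set us. d' ! \<sigma> u = d ! u"
  shows "first_requesters d' seen (map \<sigma> us) = map \<sigma> (first_requesters d seen us)"
  using assms by (induction us arbitrary: seen) auto

lemma first_requesters_relabel_files:
  assumes "inj \<tau>" and "\<forall>u\<in>set us. u < length d"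
  shows "first_requesters (map \<tau> d) (\<tau> ` seen) us = first_requesters d seen us"
  using assms
proof (induction us arbitrary: seen)
  case (Cons u us)
  then show ?case
    using inj_image_mem_iff[OF \<open>inj \<tau>\<close>, of "d ! u" seen] Cons.IH[of "insert (d ! u) seen"]
    by simp
qed simp

definition request_chain :: "nat list \<Rightarrow> nat list \<Rightarrow> nat list" where
  "request_chain d p = first_requesters d {} p"

lemma
  assumes "d \<in> demands N K" and "p \<in> permutations_of_set {..<K}"
  shows length_request_chain: "length (request_chain d p) = card (set d)"
    and set_request_chain: "set (request_chain d p) \<subseteq> {..<K}"
    and distinct_map_request_chain: "distinct (map (nth d) (request_chain d p))"
proof -
  have "nth d ` set p = set d"
    using assms by (auto simp: demands_def permutations_of_set_def set_conv_nth)
  then show "length (request_chain d p) = card (set d)"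
    by (simp add: request_chain_def length_first_requesters)
  show "set (request_chain d p) \<subseteq> {..<K}"
    using assms(2) set_first_requesters_subset
    by (fastforce simp: request_chain_def permutations_of_set_def)
  show "distinct (map (nth d) (request_chain d p))"
    by (simp add: request_chain_def distinct_map_first_requesters)
qed

lemma Ne_stats:
  assumes "d \<in> demands N K"
  shows "Ne (stats N d) = card (set d)"
proof -
  have "length (filter Q (rev (sort xs))) = length (filter Q xs)" for Q and xs :: "nat list"
    by (metis mset_filter size_mset mset_rev mset_sort)
  then have "Ne (stats N d) = length (filter (\<lambda>x. x \<noteq> 0) (map (count_list d) [0..<N]))"
    by (simp add: Ne_def stats_def)
  also have "\<dots> = card ({n. count_list d n \<noteq> 0} \<inter> {..<N})"
    by (simp add: filter_map o_def distinct_length_filter atLeast0LessThan)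
  also have "{n. count_list d n \<noteq> 0} \<inter> {..<N} = set d"
    using assms by (auto simp: demands_def count_list_0_iff)
  finally show ?thesis .
qed

lemma finite_demands: "finite (demands N K)"
proof -
  have "demands N K = {xs. set xs \<subseteq> {..<N} \<and> length xs = K}" by (auto simp: demands_def)
  then show ?thesis by (simp add: finite_lists_length_eq)
qed

definition demand_orders :: "nat \<Rightarrow> nat \<Rightarrow> nat list \<Rightarrow> (nat list \<times> nat list) set" where
  "demand_orders N K s = demand_type N K s \<times> permutations_of_set {..<K}"

lemma finite_demand_orders: "finite (demand_orders N K s)"
  using finite_demands by (simp add: demand_orders_def demand_type_def)

lemma length_request_chain_demand_orders:
  assumes "(d, p) \<in> demand_orders N K s"
  shows "length (request_chain d p) = Ne s"
  using assms length_request_chain[of d N K p] Ne_stats[of d N K]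
  by (auto simp: demand_orders_def demand_type_def)

lemma Ne_le_users:
  assumes "s \<in> stats N ` demands N K"
  shows "Ne s \<le> K"
  using assms Ne_stats card_length by (fastforce simp: demands_def)

section \<open>Symmetry of the chain counts\<close>

lemma stats_eq_if_mset_eq:
  assumes "mset d' = mset d"
  shows "stats N d' = stats N d"
proof -
  have "count_list d' = count_list d" using assms by (metis count_mset ext)
  then show ?thesis by (simp add: stats_def)
qed

lemma mset_map_transpose_upt:
  assumes "a < K" and "b < K"
  shows "mset (map (transpose a b) [0..<K]) = mset [0..<K]"
proof -
  have "distinct (map (transpose a b) [0..<K])" by (simp add: distinct_map)
  moreover have "set (map (transpose a b) [0..<K]) = set [0..<K]" using assms by simp
  ultimately show ?thesis
    using set_eq_iff_mset_eq_distinct[of "map (transpose a b) [0..<K]" "[0..<K]"] by simp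
qed

lemma count_list_map_transpose:
  "count_list (map (transpose a b) d) n = count_list d (transpose a b n)"
  by (induction d) (simp_all, metis transpose_involutory)

lemma stats_map_transpose:
  assumes "a < N" and "b < N"
  shows "stats N (map (transpose a b) d) = stats N d"
proof -
  have "map (count_list (map (transpose a b) d)) [0..<N]
      = map (count_list d) (map (transpose a b) [0..<N])"
    by (simp add: count_list_map_transpose)
  then have "mset (map (count_list (map (transpose a b) d)) [0..<N]) = mset (map (count_list d) [0..<N])"
    using mset_map_transpose_upt[OF assms] by (metis mset_map)
  then show ?thesis
    unfolding stats_def by (simp flip: sorted_list_of_multiset_mset)
qed

text \<open>A bit of file \<open>n\<close> cached by exactly the users in \<open>S\<close> is a genie bit of the \<open>i\<close>-th user of
  the request chain of \<open>(d, p)\<close> iff \<open>chain_hit (d, p) i n S\<close>.\<close>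

fun chain_hit :: "nat list \<times> nat list \<Rightarrow> nat \<Rightarrow> nat \<Rightarrow> nat set \<Rightarrow> bool" where
  "chain_hit (d, p) i n S \<longleftrightarrow> i < length (request_chain d p) \<and> d ! (request_chain d p ! i) = n
     \<and> S \<inter> set (take (Suc i) (request_chain d p)) = {}"

definition chain_count :: "nat \<Rightarrow> nat \<Rightarrow> nat list \<Rightarrow> nat \<Rightarrow> nat \<Rightarrow> nat set \<Rightarrow> nat" where
  "chain_count N K s i n S = card {x \<in> demand_orders N K s. chain_hit x i n S}"

lemma chain_hit_relabel_files:
  assumes "inj \<tau>" and "set p \<subseteq> {..<length d}"
  shows "chain_hit (map \<tau> d, p) i (\<tau> n) S = chain_hit (d, p) i n S"
proof -
  have chain: "request_chain (map \<tau> d) p = request_chain d p"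
    using first_requesters_relabel_files[OF assms(1), of p d "{}"] assms(2)
    by (auto simp: request_chain_def)
  have "request_chain d p ! i < length d" if "i < length (request_chain d p)"
    using that assms(2) set_first_requesters_subset nth_mem
    by (fastforce simp: request_chain_def)
  then show ?thesis
    using injD[OF assms(1)] by (auto simp: chain)
qed

lemma chain_hit_relabel_users:
  assumes "inj \<sigma>" and "\<forall>u\<in>set p. d' ! \<sigma> u = d ! u"
  shows "chain_hit (d', map \<sigma> p) i n (\<sigma> ` S) = chain_hit (d, p) i n S"
proof -
  have chain: "request_chain d' (map \<sigma> p) = map \<sigma> (request_chain d p)"
    using first_requesters_map[OF assms(2)] by (simp add: request_chain_def)
  have "request_chain d p ! i \<in> set p" if "i < length (request_chain d p)"
    using that set_first_requesters_subset nth_mem by (fastforce simp: request_chain_def)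
  then show ?thesis
    using assms by (auto simp: chain take_map image_Int[OF assms(1), symmetric])
qed

lemma chain_count_transpose_file:
  assumes "a < N" and "b < N"
  shows "chain_count N K s i n S = chain_count N K s i (transpose a b n) S"
proof -
  define f where "f = (\<lambda>(d :: nat list, p :: nat list). (map (transpose a b) d, p))"
  have "f x \<in> demand_orders N K s \<and> f (f x) = x
      \<and> (chain_hit x i n S \<longleftrightarrow> chain_hit (f x) i (transpose a b n) S)"
    if "x \<in> demand_orders N K s" for x
  proof -
    obtain d p where x: "x = (d, p)" by fastforce
    have d: "d \<in> demands N K" "stats N d = s" and p: "p \<in> permutations_of_set {..<K}"
      using that by (auto simp: x demand_orders_def demand_type_def)
    have "map (transpose a b) d \<in> demands N K"
      using d(1) assms by (auto simp: demands_def transpose_def)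
    moreover have "chain_hit (map (transpose a b) d, p) i (transpose a b n) S = chain_hit (d, p) i n S"
      using d(1) p by (intro chain_hit_relabel_files) (auto simp: demands_def permutations_of_set_def)
    ultimately show ?thesis
      using d p stats_map_transpose[OF assms, of d]
      by (simp add: x f_def map_idI demand_orders_def demand_type_def)
  qed
  then show ?thesis unfolding chain_count_def by (rule card_eq_by_involution)
qed

lemma relabel_users_demand_type:
  assumes "d \<in> demand_type N K s" and "a < K" and "b < K"
  shows "map (\<lambda>k. d ! transpose a b k) [0..<K] \<in> demand_type N K s"
proof -
  have len: "length d = K" and dN: "set d \<subseteq> {..<N}" and s: "stats N d = s"
    using assms(1) by (auto simp: demand_type_def demands_def)
  have "map (\<lambda>k. d ! transpose a b k) [0..<K] = map (nth d) (map (transpose a b) [0..<K])"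
    by simp
  then have "mset (map (\<lambda>k. d ! transpose a b k) [0..<K])
      = image_mset (nth d) (mset (map (transpose a b) [0..<K]))"
    by (simp only: mset_map)
  also have "\<dots> = image_mset (nth d) (mset [0..<K])"
    by (simp only: mset_map_transpose_upt[OF assms(2,3)])
  also have "\<dots> = mset (map (nth d) [0..<K])" by (simp only: mset_map)
  also have "\<dots> = mset d" using len map_nth[of d] by simp
  finally have ms: "mset (map (\<lambda>k. d ! transpose a b k) [0..<K]) = mset d" .
  then have "set (map (\<lambda>k. d ! transpose a b k) [0..<K]) = set d" by (rule mset_eq_setD)
  with dN s stats_eq_if_mset_eq[OF ms] show ?thesis
    by (auto simp: demand_type_def demands_def)
qed

lemma chain_count_transpose_users:
  assumes "a < K" and "b < K"
  shows "chain_count N K s i n S = chain_count N K s i n (transpose a b ` S)"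
proof -
  define f where "f = (\<lambda>(d :: nat list, p :: nat list).
    (map (\<lambda>k. d ! transpose a b k) [0..<K], map (transpose a b) p))"
  have "f x \<in> demand_orders N K s \<and> f (f x) = x
      \<and> (chain_hit x i n S \<longleftrightarrow> chain_hit (f x) i n (transpose a b ` S))"
    if "x \<in> demand_orders N K s" for x
  proof -
    obtain d p where x: "x = (d, p)" by fastforce
    have d: "d \<in> demand_type N K s" and p: "p \<in> permutations_of_set {..<K}"
      using that by (auto simp: x demand_orders_def)
    have len: "length d = K" using d by (simp add: demand_type_def demands_def)
    have pK: "set p = {..<K}" using p by (simp add: permutations_of_set_def)
    define d' where "d' = map (\<lambda>k. d ! transpose a b k) [0..<K]"
    have d'_nth: "d' ! transpose a b u = d ! u" if "u < K" for u
      using that assms by (simp add: d'_def transpose_def)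
    have "map (transpose a b) p \<in> permutations_of_set {..<K}"
      using p assms by (auto simp: permutations_of_set_def distinct_map)
    moreover have "map (\<lambda>k. d' ! transpose a b k) [0..<K] = d"
      using len d'_nth by (intro nth_equalityI) simp_all
    moreover have "chain_hit (d', map (transpose a b) p) i n (transpose a b ` S) = chain_hit (d, p) i n S"
      using pK d'_nth by (intro chain_hit_relabel_users) (auto simp: inj_transpose)
    ultimately show ?thesis
      using relabel_users_demand_type[OF d assms] p
      by (simp add: x f_def map_idI demand_orders_def d'_def[symmetric])
  qed
  then show ?thesis unfolding chain_count_def by (rule card_eq_by_involution)
qed

lemma chain_count_card_eq:
  assumes "S \<subseteq> {..<K}" and "S' \<subseteq> {..<K}" and "card S = card S'"
  shows "chain_count N K s i n S = chain_count N K s i n S'"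
  using assms
proof (induction "card (S - S')" arbitrary: S rule: less_induct)
  case less
  have fin: "finite S" "finite S'" using less.prems finite_subset by blast+
  show ?case
  proof (cases "S \<subseteq> S'")
    case True
    then have "S = S'" by (rule card_subset_eq[OF fin(2) _ less.prems(3)])
    then show ?thesis by simp
  next
    case False
    then obtain a where a: "a \<in> S" "a \<notin> S'" by blast
    have "\<not> S' \<subseteq> S"
      using card_subset_eq[OF fin(1), of S'] less.prems(3) a by auto
    then obtain b where b: "b \<in> S'" "b \<notin> S" by blast
    define T where "T = transpose a b ` S"
    have T: "T = insert b (S - {a})"
      using a b by (auto simp: T_def transpose_def image_iff)
    have "T - S' = (S - S') - {a}" using T a b by auto
    then have smaller: "card (T - S') < card (S - S')"
      using a fin by (metis DiffI card_Diff1_less finite_Diff)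
    have "T \<subseteq> {..<K}" using T less.prems b by auto
    moreover have "card S' > 0" using b fin by (auto simp: card_gt_0_iff)
    then have "card T = card S'"
      using T less.prems(3) a b fin by simp
    moreover have "a < K" "b < K" using a b less.prems by auto
    then have "chain_count N K s i n S = chain_count N K s i n T"
      unfolding T_def by (rule chain_count_transpose_users)
    ultimately show ?thesis
      using less.hyps[OF smaller] less.prems(2) by simp
  qed
qed

lemma card_chain_hits:
  assumes "x \<in> demand_orders N K s" and "i < Ne s"
  shows "(\<Sum>n<N. card {S. S \<subseteq> {..<K} \<and> card S = t \<and> chain_hit x i n S}) = (K - Suc i) choose t"
proof -
  obtain d p where x: "x = (d, p)" by fastforce
  have d: "d \<in> demands N K" and p: "p \<in> permutations_of_set {..<K}"
    using assms(1) by (auto simp: x demand_orders_def demand_type_def)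
  have i: "i < length (request_chain d p)"
    using assms length_request_chain_demand_orders by (simp add: x)
  define U where "U = set (take (Suc i) (request_chain d p))"
  have U: "U \<subseteq> {..<K}" "finite U"
    using set_request_chain[OF d p] set_take_subset finite_subset by (fastforce simp: U_def)+
  have "card U = Suc i"
    using distinct_map_request_chain[OF d p] i
    by (simp add: U_def distinct_card distinct_map)
  with U have card_rest: "card ({..<K} - U) = K - Suc i" by (simp add: card_Diff_subset)
  have "d ! (request_chain d p ! i) < N"
    using d set_request_chain[OF d p] i by (auto simp: demands_def set_conv_nth)
  moreover have "card {S. S \<subseteq> {..<K} \<and> card S = t \<and> chain_hit x i n S}
      = (if n = d ! (request_chain d p ! i)
         then card {S. S \<subseteq> {..<K} \<and> card S = t \<and> S \<inter> U = {}} else 0)" for n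
    using i by (auto simp: x U_def)
  ultimately have "(\<Sum>n<N. card {S. S \<subseteq> {..<K} \<and> card S = t \<and> chain_hit x i n S})
      = card {S. S \<subseteq> {..<K} \<and> card S = t \<and> S \<inter> U = {}}"
    by (simp add: sum.delta)
  also have "{S. S \<subseteq> {..<K} \<and> card S = t \<and> S \<inter> U = {}} = {S. S \<subseteq> {..<K} - U \<and> card S = t}"
    by blast
  finally show ?thesis using card_rest by (simp add: n_subsets)
qed

lemma chain_count_sum:
  assumes "i < Ne s"
  shows "(\<Sum>n<N. \<Sum>S\<in>{S. S \<subseteq> {..<K} \<and> card S = t}. chain_count N K s i n S)
    = card (demand_orders N K s) * ((K - Suc i) choose t)"
proof -
  define Sub where "Sub = {S. S \<subseteq> {..<K} \<and> card S = t}"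
  have fin_Sub: "finite Sub" unfolding Sub_def by (rule finite_subset[of _ "Pow {..<K}"]) auto
  have "(\<Sum>n<N. \<Sum>S\<in>Sub. chain_count N K s i n S)
      = (\<Sum>n<N. \<Sum>x\<in>demand_orders N K s. card {S\<in>Sub. chain_hit x i n S})"
    unfolding chain_count_def
    by (intro sum.cong refl sum_card_filter_swap fin_Sub finite_demand_orders)
  also have "\<dots> = (\<Sum>x\<in>demand_orders N K s. \<Sum>n<N. card {S\<in>Sub. chain_hit x i n S})"
    by (rule sum.swap)
  also have "\<dots> = (\<Sum>x\<in>demand_orders N K s. (K - Suc i) choose t)"
    using card_chain_hits[OF _ assms] by (intro sum.cong refl) (simp add: Sub_def conj_assoc)
  finally show ?thesis by (simp add: Sub_def)
qed

lemma chain_count_eq: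
  assumes "0 < N" and "n < N" and "S \<subseteq> {..<K}" and "i < Ne s"
  shows "real (chain_count N K s i n S)
    = real (card (demand_orders N K s)) * real ((K - Suc i) choose card S) / (real N * real (K choose card S))"
proof -
  define Sub where "Sub = {S'. S' \<subseteq> {..<K} \<and> card S' = card S}"
  have "chain_count N K s i n' S' = chain_count N K s i n S" if "n' < N" "S' \<in> Sub" for n' S'
  proof -
    have "chain_count N K s i n' S' = chain_count N K s i n' S"
      using that assms(3) by (intro chain_count_card_eq) (auto simp: Sub_def)
    also have "\<dots> = chain_count N K s i n S"
      using chain_count_transpose_file[of n' N n K s i n' S] that assms(2) by simp
    finally show ?thesis .
  qed
  then have "(\<Sum>n'<N. \<Sum>S'\<in>Sub. chain_count N K s i n' S') = N * (card Sub * chain_count N K s i n S)"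
    by simp
  moreover have "card Sub = K choose card S" unfolding Sub_def by (simp add: n_subsets)
  ultimately have "N * ((K choose card S) * chain_count N K s i n S)
      = card (demand_orders N K s) * ((K - Suc i) choose card S)"
    using chain_count_sum[OF assms(4), of N K "card S"] by (simp add: Sub_def)
  then have "real N * (real (K choose card S) * real (chain_count N K s i n S))
      = real (card (demand_orders N K s)) * real ((K - Suc i) choose card S)"
    by (metis of_nat_mult)
  moreover have "card S \<le> K" using card_mono[OF _ assms(3)] by simp
  ultimately show ?thesis using assms(1) by (simp add: field_simps)
qed

section \<open>Averaging over demands and orderings\<close>

definition cachers :: "nat \<Rightarrow> (nat \<Rightarrow> (nat \<times> nat) set) \<Rightarrow> nat \<times> nat \<Rightarrow> nat set" where
  "cachers K P x = {k\<in>{..<K}. x \<in> P k}"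

lemma cachers_subset: "cachers K P x \<subseteq> {..<K}"
  by (auto simp: cachers_def)

lemma cachers_disjoint_take_iff:
  assumes "i < length us" and "set us \<subseteq> {..<K}"
  shows "cachers K P x \<inter> set (take (Suc i) us) = {} \<longleftrightarrow> (\<forall>l\<le>i. x \<notin> P (us ! l))"
proof
  assume disj: "cachers K P x \<inter> set (take (Suc i) us) = {}"
  show "\<forall>l\<le>i. x \<notin> P (us ! l)"
  proof (intro allI impI)
    fix l assume "l \<le> i"
    then have "us ! l \<in> set (take (Suc i) us)" and "us ! l \<in> set us"
      using assms(1) by (auto simp: in_set_conv_nth intro!: exI[of _ l])
    then have "us ! l \<in> set (take (Suc i) us)" and "us ! l < K" using assms(2) by auto
    with disj show "x \<notin> P (us ! l)" by (auto simp: cachers_def)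
  qed
next
  assume "\<forall>l\<le>i. x \<notin> P (us ! l)"
  then show "cachers K P x \<inter> set (take (Suc i) us) = {}"
    by (auto simp: cachers_def in_set_conv_nth)
qed

lemma card_genie_bits_request_chain:
  assumes "(d, p) \<in> demand_orders N K s"
  shows "card (genie_bits F d P (request_chain d p))
    = (\<Sum>i<Ne s. card {x \<in> {..<N} \<times> {..<F}. chain_hit (d, p) i (fst x) (cachers K P x)})"
proof -
  define us where "us = request_chain d p"
  define H where "H i = {x \<in> {..<N} \<times> {..<F}. chain_hit (d, p) i (fst x) (cachers K P x)}" for i
  have d: "d \<in> demands N K" and p: "p \<in> permutations_of_set {..<K}"
    using assms by (auto simp: demand_orders_def demand_type_def)
  have len: "length us = Ne s"
    using length_request_chain_demand_orders[OF assms] by (simp add: us_def)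
  have us: "set us \<subseteq> {..<K}" using set_request_chain[OF d p] by (simp add: us_def)
  have "d ! (us ! i) < N" if "i < length us" for i
    using d us that by (auto simp: demands_def set_conv_nth)
  then have "genie_bits F d P us = (\<Union>i<Ne s. H i)"
    using cachers_disjoint_take_iff[OF _ us] len
    by (auto simp: genie_bits_def H_def us_def[symmetric])
  moreover have "i = j" if "i < Ne s" "j < Ne s" "d ! (us ! i) = d ! (us ! j)" for i j
    using that distinct_map_request_chain[OF d p] len
      nth_eq_iff_index_eq[of "map (nth d) us" i j] by (simp add: us_def)
  then have "H i \<inter> H j = {}" if "i < Ne s" "j < Ne s" "i \<noteq> j" for i j
    using that by (auto simp: H_def us_def[symmetric])
  ultimately show ?thesis
    by (simp add: us_def[symmetric] H_def card_UN_disjoint)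
qed

text \<open>Averaged over \<open>demand_orders\<close>, a bit cached by exactly \<open>t\<close> users is a genie bit of the request
  chain with frequency \<open>yma_rate K (Ne s) t / N\<close> (by \<open>chain_count_eq\<close> and \<open>sum_choose_diff\<close>); this is
  the rate of the Yu--Maddah-Ali--Avestimehr scheme.\<close>

definition yma_rate :: "nat \<Rightarrow> nat \<Rightarrow> nat \<Rightarrow> real" where
  "yma_rate K m t = (real (K choose (t + 1)) - real ((K - m) choose (t + 1))) / real (K choose t)"

lemma yma_rate_nonneg: "0 \<le> yma_rate K m t"
  using binomial_right_mono[of "K - m" K "t + 1"] by (simp add: yma_rate_def)

lemma yma_rate_K: "yma_rate K m K = 0"
  by (simp add: yma_rate_def binomial_eq_0)

lemma sum_card_genie_bits_request_chain:
  assumes "0 < N" and "Ne s \<le> K"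
  shows "(\<Sum>y\<in>demand_orders N K s. real (card (genie_bits F (fst y) P (request_chain (fst y) (snd y)))))
    = real (card (demand_orders N K s)) / real N
      * (\<Sum>x\<in>{..<N} \<times> {..<F}. yma_rate K (Ne s) (card (cachers K P x)))"
proof -
  define Om where "Om = demand_orders N K s"
  define A :: "(nat \<times> nat) set" where "A = {..<N} \<times> {..<F}"
  have "(\<Sum>y\<in>Om. card (genie_bits F (fst y) P (request_chain (fst y) (snd y))))
      = (\<Sum>y\<in>Om. \<Sum>i<Ne s. card {x\<in>A. chain_hit y i (fst x) (cachers K P x)})"
    by (intro sum.cong refl) (auto simp: Om_def A_def card_genie_bits_request_chain)
  also have "\<dots> = (\<Sum>i<Ne s. \<Sum>y\<in>Om. card {x\<in>A. chain_hit y i (fst x) (cachers K P x)})"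
    by (rule sum.swap)
  also have "\<dots> = (\<Sum>i<Ne s. \<Sum>x\<in>A. card {y\<in>Om. chain_hit y i (fst x) (cachers K P x)})"
    by (intro sum.cong refl sum_card_filter_swap) (simp_all add: Om_def A_def finite_demand_orders)
  also have "\<dots> = (\<Sum>x\<in>A. \<Sum>i<Ne s. chain_count N K s i (fst x) (cachers K P x))"
    by (simp only: sum.swap[of _ "{..<Ne s}"] chain_count_def Om_def)
  finally have "(\<Sum>y\<in>Om. real (card (genie_bits F (fst y) P (request_chain (fst y) (snd y)))))
      = (\<Sum>x\<in>A. \<Sum>i<Ne s. real (chain_count N K s i (fst x) (cachers K P x)))"
    by (metis (no_types, lifting) of_nat_sum sum.cong)
  also have "\<dots> = (\<Sum>x\<in>A. real (card Om) / real N * yma_rate K (Ne s) (card (cachers K P x)))"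
  proof (rule sum.cong[OF refl])
    fix x assume "x \<in> A"
    then have "fst x < N" by (auto simp: A_def)
    then have "(\<Sum>i<Ne s. real (chain_count N K s i (fst x) (cachers K P x)))
        = (\<Sum>i<Ne s. real (card Om) / (real N * real (K choose card (cachers K P x)))
            * real ((K - Suc i) choose card (cachers K P x)))"
      using chain_count_eq[OF assms(1) _ cachers_subset] by (intro sum.cong refl) (simp add: Om_def)
    also have "\<dots> = real (card Om) / (real N * real (K choose card (cachers K P x)))
        * (\<Sum>i<Ne s. real ((K - Suc i) choose card (cachers K P x)))"
      by (simp only: sum_distrib_left)
    also have "\<dots> = real (card Om) / real N * yma_rate K (Ne s) (card (cachers K P x))"
      by (simp add: sum_choose_diff[OF assms(2)] yma_rate_def)
    finally show "(\<Sum>i<Ne s. real (chain_count N K s i (fst x) (cachers K P x)))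
        = real (card Om) / real N * yma_rate K (Ne s) (card (cachers K P x))" .
  qed
  finally show ?thesis by (simp add: Om_def A_def sum_distrib_left)
qed

lemma avg_rate_ge_yma_average:
  assumes N: "0 < N" and F: "0 < F" and eps: "0 \<le> eps" and s: "s \<in> stats N ` demands N K"
  shows "(\<Sum>x\<in>{..<N} \<times> {..<F}. yma_rate K (Ne s) (card (cachers K P x))) / (real N * real F)
      - (1 / real F + real (Ne s) ^ 2 * eps)
    \<le> avg_rate N K F eps s P"
proof -
  define D where "D = demand_type N K s"
  define Q where "Q = permutations_of_set {..<K :: nat}"
  define c where "c = 1 / real F + real (Ne s) ^ 2 * eps"
  define g where "g y = real (card (genie_bits F (fst y) P (request_chain (fst y) (snd y)))) / real F - c"
    for y
  have Om: "demand_orders N K s = D \<times> Q" by (simp add: demand_orders_def D_def Q_def)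
  have "D \<noteq> {}" using s by (auto simp: D_def demand_type_def)
  moreover have "finite D" using finite_demands by (simp add: D_def demand_type_def)
  moreover have "[0..<K] \<in> Q" by (auto simp: Q_def)
  moreover have "finite Q" by (simp add: Q_def)
  ultimately have card_Om: "0 < card (demand_orders N K s)"
    by (auto simp: Om card_cartesian_product card_gt_0_iff)
  have "g (d, p) \<le> opt_rate N K F eps d P" if "d \<in> D" "p \<in> Q" for d p
  proof -
    have "(d, p) \<in> demand_orders N K s" using that by (simp add: Om)
    moreover have "d \<in> demands N K" using that(1) by (simp add: D_def demand_type_def)
    ultimately show ?thesis
      using opt_rate_ge_genie_bits[of d N K "request_chain d p" eps F P] eps F that(2)
        set_request_chain length_request_chain_demand_orders
      by (simp add: g_def c_def Q_def)
  qed
  with \<open>finite D\<close> \<open>finite Q\<close> \<open>[0..<K] \<in> Q\<close>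
  have "(\<Sum>y\<in>demand_orders N K s. g y) / real (card (demand_orders N K s))
      \<le> avg_rate N K F eps s P"
    unfolding Om avg_rate_def D_def[symmetric] by (intro average_product_le) auto
  moreover have "(\<Sum>y\<in>demand_orders N K s. g y) / real (card (demand_orders N K s))
      = (\<Sum>x\<in>{..<N} \<times> {..<F}. yma_rate K (Ne s) (card (cachers K P x))) / (real N * real F) - c"
    using sum_card_genie_bits_request_chain[OF N Ne_le_users[OF s], of F P] card_Om N F
    by (simp add: g_def sum_subtractf field_simps flip: sum_divide_distrib)
  ultimately show ?thesis by (simp add: c_def)
qed

lemma sum_card_cachers_le:
  assumes "uncoded_prefetching N K F M P"
  shows "(\<Sum>x\<in>{..<N} \<times> {..<F}. real (card (cachers K P x))) \<le> real K * M * real F"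
proof -
  have "(\<Sum>x\<in>{..<N} \<times> {..<F}. card (cachers K P x)) = (\<Sum>k<K. card {x\<in>{..<N} \<times> {..<F}. x \<in> P k})"
    unfolding cachers_def by (rule sum_card_filter_swap) auto
  also have "\<dots> \<le> (\<Sum>k<K. card (P k))"
  proof (intro sum_mono card_mono)
    fix k assume "k \<in> {..<K}"
    then show "finite (P k)"
      using assms finite_subset[of "P k" "{..<N} \<times> {..<F}"] by (auto simp: uncoded_prefetching_def)
  qed auto
  finally have "(\<Sum>x\<in>{..<N} \<times> {..<F}. real (card (cachers K P x))) \<le> (\<Sum>k<K. real (card (P k)))"
    by (metis of_nat_le_iff of_nat_sum)
  also have "\<dots> \<le> (\<Sum>k<K. M * real F)"
    using assms by (intro sum_mono) (simp add: uncoded_prefetching_def)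
  finally show ?thesis by simp
qed

lemma lower_conv_env_le_cache_average:
  assumes N: "0 < N" and F: "0 < F" and M: "M \<le> real N" and P: "uncoded_prefetching N K F M P"
    and f: "\<forall>i\<le>K. 0 \<le> f i" "f K = 0"
  shows "lower_conv_env K f (real K * M / real N)
    \<le> (\<Sum>x\<in>{..<N} \<times> {..<F}. f (card (cachers K P x))) / (real N * real F)"
proof -
  define A :: "(nat \<times> nat) set" where "A = {..<N} \<times> {..<F}"
  define l where "l i = real (card {x\<in>A. card (cachers K P x) = i}) / (real N * real F)" for i
  have t_le: "\<forall>x\<in>A. card (cachers K P x) \<le> K"
    using card_mono[OF _ cachers_subset] by fastforce
  have average: "(\<Sum>x\<in>A. g (card (cachers K P x))) / (real N * real F) = (\<Sum>i\<le>K. l i * g i)"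
    for g :: "nat \<Rightarrow> real"
  proof -
    have "(\<Sum>x\<in>A. g (card (cachers K P x))) = (\<Sum>i\<le>K. real (card {x\<in>A. card (cachers K P x) = i}) * g i)"
      by (rule sum_comp_by_fibres[OF _ t_le]) (simp add: A_def)
    then show ?thesis by (simp add: l_def sum_divide_distrib)
  qed
  have "(\<Sum>i\<le>K. l i) = 1"
    using average[of "\<lambda>_. 1"] N F by (simp add: A_def card_cartesian_product)
  moreover have "(\<Sum>i\<le>K. l i * real i) \<le> real K * M / real N"
  proof -
    have "(\<Sum>x\<in>A. real (card (cachers K P x))) / (real N * real F) \<le> real K * M * real F / (real N * real F)"
      using sum_card_cachers_le[OF P] N F by (intro divide_right_mono) (simp_all add: A_def)
    then show ?thesis using average[of real] F by simp
  qed
  moreover have "real K * M / real N \<le> real K"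
    using M N by (simp add: divide_le_eq mult_left_mono)
  moreover have "\<forall>i\<le>K. 0 \<le> l i" by (simp add: l_def)
  ultimately show ?thesis
    using lower_conv_env_le[OF f] average[of f] by (simp add: A_def)
qed

theorem lemma2:
  fixes N K F :: nat and M eps :: real and s :: "nat list"
    and P :: "nat \<Rightarrow> (nat \<times> nat) set"
  assumes "N > 0" and "K > 0" and "F > 0"
    and "0 \<le> M" and "M \<le> real N"
    and "eps > 0"
    and "s \<in> stats N ` demands N K"
    and "uncoded_prefetching N K F M P"
  shows "avg_rate N K F eps s P \<ge>
     lower_conv_env K
       (\<lambda>t. (real (K choose (t + 1)) - real ((K - Ne s) choose (t + 1))) / real (K choose t))
       (real K * M / real N)
     - (1 / real F + real (Ne s) ^ 2 * eps)"
proof -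
  have "(\<lambda>t. (real (K choose (t + 1)) - real ((K - Ne s) choose (t + 1))) / real (K choose t))
      = yma_rate K (Ne s)"
    by (simp add: fun_eq_iff yma_rate_def)
  moreover have "lower_conv_env K (yma_rate K (Ne s)) (real K * M / real N)
      \<le> (\<Sum>x\<in>{..<N} \<times> {..<F}. yma_rate K (Ne s) (card (cachers K P x))) / (real N * real F)"
    using assms by (intro lower_conv_env_le_cache_average) (simp_all add: yma_rate_nonneg yma_rate_K)
  moreover have "(\<Sum>x\<in>{..<N} \<times> {..<F}. yma_rate K (Ne s) (card (cachers K P x))) / (real N * real F)
      - (1 / real F + real (Ne s) ^ 2 * eps) \<le> avg_rate N K F eps s P"
    using assms by (intro avg_rate_ge_yma_average) simp_all
  ultimately show ?thesis by simp
qed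

end
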